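(* Let $k=\mathbb{Q}(a_1,a_2,a_3,a_4)$ with $a_i$ indeterminates, $P=X^4+a_1X^3+a_2X^2+a_3X+a_4\in k[X]$, and let $Q=b_0X^3+b_1X^2+b_2X+b_3$ be the remainder of the Euclidean division of $P'^2$ by $P$. If $x_1,\dots,x_4$ are the roots of $P$ (in an algebraic closure of $k$), then the three roots of $Q$ are $$\frac{x_1x_2-x_3x_4}{x_1+x_2-x_3-x_4},\quad \frac{x_1x_3-x_2x_4}{x_1+x_3-x_2-x_4},\quad \frac{x_1x_4-x_2x_3}{x_1+x_4-x_2-x_3}.$$
   Context: $P'$ denotes the derivative of $P$ with respect to $X$. *)

theory Defs
  imports "HOL-Computational_Algebra.Polynomial"
begin

text \<open>Four elements a, b, c, d of a field of characteristic 0 are algebraically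
independent over the rationals: no nonzero rational polynomial in four variables
(represented as a nested univariate polynomial, outermost variable for a, innermost
for d) vanishes at (a, b, c, d).\<close>

definition eval4 :: "rat poly poly poly poly \<Rightarrow> 'a::field_char_0 \<Rightarrow> 'a \<Rightarrow> 'a \<Rightarrow> 'a \<Rightarrow> 'a" where
  "eval4 p a b c d =
     poly (map_poly (\<lambda>q. poly (map_poly (\<lambda>r. poly (map_poly (\<lambda>s. poly (map_poly of_rat s) d) r) c) q) b) p) a"

definition alg_indep4 :: "'a::field_char_0 \<Rightarrow> 'a \<Rightarrow> 'a \<Rightarrow> 'a \<Rightarrow> bool" where
  "alg_indep4 a b c d \<longleftrightarrow> (\<forall>p. p \<noteq> 0 \<longrightarrow> eval4 p a b c d \<noteq> 0)"

end

(* Euclidean division of P'^2 by a generic monic quartic gives the remainder with explicit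
   coefficients. Substituting Vieta's formulas, it factors as the product of the three linear
   polynomials (x_i + x_j - x_k - x_l) X - (x_i x_j - x_k x_l), an identity in the roots.
   Its leading coefficient is -a_1^3 + 4 a_1 a_2 - 8 a_3, a nonzero polynomial in the a_i, so
   algebraic independence makes all three denominators nonzero. *)
theory Submission
  imports Defs
begin

lemma pderiv_squared_mod_monic_quartic:
  fixes a1 a2 a3 a4 :: "'a::field"
  shows "(pderiv [:a4, a3, a2, a1, 1:])^2 mod [:a4, a3, a2, a1, 1:] =
    [:a3^2 - a1^2*a4, 4*a2*a3 - 8*a1*a4 - a1^2*a3,
      4*a2^2 - 16*a4 - 2*a1*a3 - a1^2*a2, -(a1^3) + 4*a1*a2 - 8*a3:]"
    (is "(pderiv ?P)^2 mod ?P = ?R")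
proof -
  have "(pderiv ?P)^2 = [:a1^2, 8*a1, 16:] * ?P + ?R"
    by (simp add: pderiv_pCons power2_eq_square power3_eq_cube algebra_simps)
  then have "(pderiv ?P)^2 mod ?P = ?R mod ?P"
    by (simp only: mod_mult_self3)
  also have "\<dots> = ?R"
    by (rule mod_poly_less) (simp add: degree_pCons_le le_less_trans)
  finally show ?thesis .
qed

lemma pderiv_squared_mod_split_quartic:
  fixes x1 x2 x3 x4 :: "'a::field"
  assumes "P = [:-x1, 1:] * [:-x2, 1:] * [:-x3, 1:] * [:-x4, 1:]"
  shows "(pderiv P)^2 mod P =
    [:-(x1*x2 - x3*x4), x1 + x2 - x3 - x4:] *
    [:-(x1*x3 - x2*x4), x1 + x3 - x2 - x4:] *
    [:-(x1*x4 - x2*x3), x1 + x4 - x2 - x3:]"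
proof -
  have P_coeffs: "P = [:x1*x2*x3*x4, -(x1*x2*x3 + x1*x2*x4 + x1*x3*x4 + x2*x3*x4),
      x1*x2 + x1*x3 + x1*x4 + x2*x3 + x2*x4 + x3*x4, -(x1 + x2 + x3 + x4), 1:]"
    using assms by (simp add: algebra_simps)
  show ?thesis
    unfolding P_coeffs pderiv_squared_mod_monic_quartic
    by simp algebra
qed

lemma alg_indep4_remainder_lead_coeff_nonzero:
  fixes a1 a2 a3 a4 :: "'a::field_char_0"
  assumes "alg_indep4 a1 a2 a3 a4"
  shows "-(a1^3) + 4*a1*a2 - 8*a3 \<noteq> 0"
proof -
  \<comment> \<open>the polynomial -A^3 + 4AB - 8C in the nested encoding of eval4\<close>
  define p :: "rat poly poly poly poly" where
    "p = [:[:[:0, [:-8:]:]:], [:0, [:[:4:]:]:], 0, [:[:[:-1:]:]:]:]"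
  have "eval4 p a1 a2 a3 a4 = -(a1^3) + 4*a1*a2 - 8*a3"
    by (simp add: p_def eval4_def map_poly_pCons algebra_simps power3_eq_cube)
  moreover have "p \<noteq> 0"
    by (simp add: p_def)
  ultimately show ?thesis
    using assms by (auto simp: alg_indep4_def)
qed

lemma linear_poly_eq_smult_monic:
  fixes c e :: "'a::field"
  assumes "e \<noteq> 0"
  shows "[:-c, e:] = smult e [:-(c/e), 1:]"
  using assms by simp

lemma prod_linear_polys_eq_smult_monic:
  fixes c1 c2 c3 e1 e2 e3 :: "'a::field"
  assumes "e1 \<noteq> 0" "e2 \<noteq> 0" "e3 \<noteq> 0"
  shows "[:-c1, e1:] * [:-c2, e2:] * [:-c3, e3:] =
    smult (e1 * e2 * e3) ([:-(c1/e1), 1:] * [:-(c2/e2), 1:] * [:-(c3/e3), 1:])"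
  using assms
  by (simp only: not_False_eq_True linear_poly_eq_smult_monic
      mult_smult_left mult_smult_right smult_smult mult_ac)

theorem proposition2:
  fixes a1 a2 a3 a4 x1 x2 x3 x4 :: "'a::field_char_0"
    and P Q :: "'a poly"
  assumes indep: "alg_indep4 a1 a2 a3 a4"
    and P_def: "P = [:a4, a3, a2, a1, 1:]"
    and Q_def: "Q = (pderiv P)^2 mod P"
    and roots: "P = [:-x1, 1:] * [:-x2, 1:] * [:-x3, 1:] * [:-x4, 1:]"
  shows "degree Q = 3 \<and>
         Q = smult (lead_coeff Q)
               ([:-((x1*x2 - x3*x4) / (x1 + x2 - x3 - x4)), 1:] *
                [:-((x1*x3 - x2*x4) / (x1 + x3 - x2 - x4)), 1:] *
                [:-((x1*x4 - x2*x3) / (x1 + x4 - x2 - x3)), 1:])"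
    (is "_ \<and> Q = smult _ ?M")
proof -
  let ?e = "(x1 + x2 - x3 - x4) * (x1 + x3 - x2 - x4) * (x1 + x4 - x2 - x3)"
  have Q_split: "Q =
      [:-(x1*x2 - x3*x4), x1 + x2 - x3 - x4:] *
      [:-(x1*x3 - x2*x4), x1 + x3 - x2 - x4:] *
      [:-(x1*x4 - x2*x3), x1 + x4 - x2 - x3:]"
    unfolding Q_def by (rule pderiv_squared_mod_split_quartic[OF roots])
  have "?e = coeff Q 3"
    unfolding Q_split by (simp add: numeral_3_eq_3)
  also have "\<dots> = -(a1^3) + 4*a1*a2 - 8*a3"
    unfolding Q_def P_def pderiv_squared_mod_monic_quartic by (simp add: numeral_3_eq_3)
  finally have "?e \<noteq> 0"
    using alg_indep4_remainder_lead_coeff_nonzero[OF indep] by simp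
  then have "x1 + x2 - x3 - x4 \<noteq> 0" "x1 + x3 - x2 - x4 \<noteq> 0" "x1 + x4 - x2 - x3 \<noteq> 0"
    by auto
  then have "Q = smult ?e ?M"
    unfolding Q_split by (rule prod_linear_polys_eq_smult_monic)
  moreover have "degree ?M = 3" "lead_coeff ?M = 1"
    by (simp_all add: degree_mult_eq lead_coeff_mult)
  ultimately show ?thesis
    using \<open>?e \<noteq> 0\<close> by simp
qed

end
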